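(* Let $G$ be a finite simple graph with edge weight function $w$ and vertex weight function $w_1$, let $u$ be a vertex of $G$, and let $T=T(G,u)$ be the weighted path-tree of $G$ with respect to $u$. Then $$\frac{\eta_{(w,w_1)}(G\setminus u,x)}{\eta_{(w,w_1)}(G,x)}=\frac{\eta_{(w,w_1)}(T\setminus u,x)}{\eta_{(w,w_1)}(T,x)}.$$
   Context: An edge weight function $w$ assigns a nonzero complex number to each edge; a vertex weight function $w_1$ assigns a real number (possibly $0$) to each vertex; subgraphs carry restricted weights; $G\setminus u$ deletes $u$ and its incident edges. For $A\subseteq E(G)$, $w(A)=\prod_{e\in A}w(e)$. $\mu_w(G,x)=\sum_{M}(-1)^{|M|}|w(M)|^2x^{n-2|M|}$ over all matchings $M$ (including empty). $\eta_{(w,w_1)}(G,x)=\sum_{S\subseteq V(G)}(-1)^{|V(G)\setminus S|}\big(\prod_{v\in V(G)\setminus S}w_1(v)\big)\mu_w(G[S],x)$ with $G[S]$ the induced subgraph; $\mu_w,\eta$ of the empty graph equal $1$. The path-tree $T(G,u)$ has as vertices the paths in $G$ starting at $u$ (the trivial path $u$ included, and denoted $u$); two such paths are adjacent iff one is obtained from the other by appending one vertex, i.e. $p'=p\,y$ where $y$ is adjacent in $G$ to the last vertex $z$ of $p$; this edge gets weight $w(e_{zy})$. The vertex $u$ of $T$ gets weight $w_1(u)$, and a path of length at least $1$ gets weight $w_1$ of its endpoint other than $u$. *)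

theory Defs
  imports Complex_Main
begin

definition simple_graph :: "'v set \<Rightarrow> 'v set set \<Rightarrow> bool" where
  "simple_graph V E \<longleftrightarrow> finite V \<and> (\<forall>e\<in>E. \<exists>a b. a \<noteq> b \<and> a \<in> V \<and> b \<in> V \<and> e = {a, b})"

definition matchings :: "'v set set \<Rightarrow> 'v set set set" where
  "matchings E = {M. M \<subseteq> E \<and> (\<forall>e\<in>M. \<forall>f\<in>M. e \<noteq> f \<longrightarrow> e \<inter> f = {})}"

definition mu_w :: "('v set \<Rightarrow> complex) \<Rightarrow> 'v set \<Rightarrow> 'v set set \<Rightarrow> real \<Rightarrow> real" where
  "mu_w w V E x = (\<Sum>M\<in>matchings E. (-1) ^ card M * (cmod (\<Prod>e\<in>M. w e))\<^sup>2 * x ^ (card V - 2 * card M))"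

definition induced_edges :: "'v set set \<Rightarrow> 'v set \<Rightarrow> 'v set set" where
  "induced_edges E S = {e \<in> E. e \<subseteq> S}"

definition eta :: "('v set \<Rightarrow> complex) \<Rightarrow> ('v \<Rightarrow> real) \<Rightarrow> 'v set \<Rightarrow> 'v set set \<Rightarrow> real \<Rightarrow> real" where
  "eta w w1 V E x = (\<Sum>S\<in>Pow V. (-1) ^ card (V - S) * (\<Prod>v\<in>V - S. w1 v) * mu_w w S (induced_edges E S) x)"

definition del_vertices :: "'v set \<Rightarrow> 'v \<Rightarrow> 'v set" where
  "del_vertices V u = V - {u}"
definition del_edges :: "'v set set \<Rightarrow> 'v \<Rightarrow> 'v set set" where
  "del_edges E u = {e \<in> E. u \<notin> e}"

definition gpaths :: "'v set \<Rightarrow> 'v set set \<Rightarrow> 'v \<Rightarrow> 'v list set" where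
  "gpaths V E u = {p. p \<noteq> [] \<and> hd p = u \<and> distinct p \<and> set p \<subseteq> V \<and>
      (\<forall>i. Suc i < length p \<longrightarrow> {p ! i, p ! Suc i} \<in> E)}"

definition tree_edges :: "'v set \<Rightarrow> 'v set set \<Rightarrow> 'v \<Rightarrow> 'v list set set" where
  "tree_edges V E u = {{p, p @ [y]} | p y. p \<in> gpaths V E u \<and> p @ [y] \<in> gpaths V E u}"

(* edge weight on the path-tree: edge {p, p@[y]} gets w(e_{zy}), z = last p *)
definition tree_w :: "('v set \<Rightarrow> complex) \<Rightarrow> 'v list set \<Rightarrow> complex" where
  "tree_w w e = (let q = (THE q. q \<in> e \<and> q \<noteq> [] \<and> butlast q \<in> e) in w {last (butlast q), last q})"

definition tree_w1 :: "('v \<Rightarrow> real) \<Rightarrow> 'v list \<Rightarrow> real" where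
  "tree_w1 w1 p = w1 (last p)"

end

theory Submission
  imports Defs
begin

text \<open>
  Expanding the sum over induced subgraphs turns \<open>eta\<close> into a vertex-weighted matching
  polynomial \<open>F\<close>: each matching \<open>M\<close> contributes \<open>(-1)\<^bsup>|M|\<^esup>\<close> times the product of
  \<open>c e = |w e|\<^sup>2\<close> over its edges and of \<open>f v = x - w1 v\<close> over the vertices it leaves
  uncovered.
  This \<open>F\<close> is multiplicative over disjoint unions and obeys the vertex recurrence
  \<open>F(G) = f(u) F(G - u) - \<Sum>\<^sub>v c(uv) F(G - u - v)\<close>, the sum ranging over the neighbours
  of \<open>u\<close>. The path tree \<open>T(G, u)\<close> is the root joined to the path trees \<open>T(G - u, v)\<close>
  of these neighbours, so the recurrence at its root involves only those subtrees, and
  induction on the number of vertices yields \<open>F(G - u) F(T) = F(G) F(T - u)\<close>.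
  The argument works for arbitrary edge weights.
\<close>

lemma simple_graph_edgeE:
  assumes "simple_graph V E" "e \<in> E"
  obtains a b where "a \<noteq> b" "a \<in> V" "b \<in> V" "e = {a, b}"
  using assms unfolding simple_graph_def by blast

lemma simple_graph_finite_verts: "simple_graph V E \<Longrightarrow> finite V"
  unfolding simple_graph_def by simp

lemma simple_graph_edge_subset: "simple_graph V E \<Longrightarrow> e \<in> E \<Longrightarrow> e \<subseteq> V"
  by (auto elim: simple_graph_edgeE)

lemma simple_graph_neighbour: "simple_graph V E \<Longrightarrow> {u, v} \<in> E \<Longrightarrow> u \<in> V \<and> v \<in> V \<and> u \<noteq> v"
  by (auto elim!: simple_graph_edgeE simp: doubleton_eq_iff)

lemma simple_graph_finite_edges:
  assumes "simple_graph V E" shows "finite E"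
proof -
  have "E \<subseteq> Pow V" "finite V" using assms unfolding simple_graph_def by auto
  then show ?thesis by (meson finite_Pow_iff finite_subset)
qed

lemma simple_graph_del_edges: "simple_graph V E \<Longrightarrow> simple_graph (V - {u}) (del_edges E u)"
  unfolding simple_graph_def del_edges_def by (auto; metis insertCI)

lemma simple_graph_UN:
  assumes "finite I" "\<And>i. i \<in> I \<Longrightarrow> simple_graph (V i) (E i)"
  shows "simple_graph (\<Union>i\<in>I. V i) (\<Union>i\<in>I. E i)"
  unfolding simple_graph_def
proof (intro conjI ballI)
  show "finite (\<Union>i\<in>I. V i)" using assms unfolding simple_graph_def by auto
  fix e assume "e \<in> (\<Union>i\<in>I. E i)"
  then obtain i where i: "i \<in> I" "e \<in> E i" by blast
  with assms(2) obtain a b where "a \<noteq> b" "a \<in> V i" "b \<in> V i" "e = {a, b}"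
    by (meson simple_graph_edgeE)
  then show "\<exists>a b. a \<noteq> b \<and> a \<in> (\<Union>i\<in>I. V i) \<and> b \<in> (\<Union>i\<in>I. V i) \<and> e = {a, b}"
    using i by blast
qed

lemma simple_graph_disjoint_edges:
  assumes "simple_graph V1 E1" "simple_graph V2 E2" "V1 \<inter> V2 = {}"
  shows "E1 \<inter> E2 = {}"
proof -
  have "e \<subseteq> V1 \<inter> V2" "e \<noteq> {}" if "e \<in> E1" "e \<in> E2" for e
    using that assms(1,2) by (auto elim: simple_graph_edgeE)
  then show ?thesis using assms(3) by blast
qed

lemma finite_del_edges [simp]: "finite E \<Longrightarrow> finite (del_edges E u)"
  unfolding del_edges_def by simp

lemma finite_matchings: "finite E \<Longrightarrow> finite (matchings E)"
  unfolding matchings_def by (rule finite_subset[of _ "Pow E"]) auto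

lemma matching_finite: "finite E \<Longrightarrow> M \<in> matchings E \<Longrightarrow> finite M"
  unfolding matchings_def using finite_subset by blast

lemma matchings_empty: "matchings {} = {{}}"
  unfolding matchings_def by auto

lemma matchings_induced_edges: "matchings (induced_edges E S) = {M \<in> matchings E. \<Union>M \<subseteq> S}"
  unfolding matchings_def induced_edges_def by auto

lemma card_Union_matching:
  assumes "simple_graph V E" "M \<in> matchings E"
  shows "card (\<Union>M) = 2 * card M"
proof -
  have card_edge: "card e = 2" if "e \<in> M" for e
    using assms that unfolding matchings_def by (auto elim: simple_graph_edgeE)
  have "card (\<Union>M) = sum card M"
  proof (rule card_Union_disjoint)
    show "pairwise disjnt M" using assms(2) unfolding matchings_def pairwise_def disjnt_def by blast
  qed (use card_edge in \<open>auto intro: card_ge_0_finite\<close>)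
  also have "\<dots> = 2 * card M" using card_edge by simp
  finally show ?thesis .
qed

lemma matchings_avoiding_vertex: "{M \<in> matchings E. \<forall>e\<in>M. u \<notin> e} = matchings (del_edges E u)"
  unfolding matchings_def del_edges_def by auto

lemma matchings_covering_vertex:
  assumes "simple_graph V E"
  shows "{M \<in> matchings E. \<exists>e\<in>M. u \<in> e}
       = (\<Union>v\<in>{v. {u, v} \<in> E}. insert {u, v} ` matchings (del_edges (del_edges E u) v))"
proof (intro equalityI subsetI)
  fix M assume "M \<in> {M \<in> matchings E. \<exists>e\<in>M. u \<in> e}"
  then obtain e where M: "M \<in> matchings E" "e \<in> M" "u \<in> e" by auto
  then have "e \<in> E" unfolding matchings_def by auto
  then obtain a b where "e = {a, b}" by (rule simple_graph_edgeE[OF assms])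
  then obtain v where v: "e = {u, v}" using M(3) by auto
  have "M - {e} \<subseteq> del_edges (del_edges E u) v"
  proof
    fix g assume "g \<in> M - {e}"
    then have "g \<in> E" "g \<inter> e = {}" using M unfolding matchings_def by auto
    then show "g \<in> del_edges (del_edges E u) v" using v unfolding del_edges_def by auto
  qed
  then have "M - {e} \<in> matchings (del_edges (del_edges E u) v)"
    using M(1) unfolding matchings_def by auto
  moreover have "M = insert {u, v} (M - {e})" using M v by auto
  ultimately show "M \<in> (\<Union>v\<in>{v. {u, v} \<in> E}. insert {u, v} ` matchings (del_edges (del_edges E u) v))"
    using \<open>e \<in> E\<close> v by blast
next
  fix M assume "M \<in> (\<Union>v\<in>{v. {u, v} \<in> E}. insert {u, v} ` matchings (del_edges (del_edges E u) v))"
  then obtain v M' where "{u, v} \<in> E" "M' \<in> matchings (del_edges (del_edges E u) v)" "M = insert {u, v} M'"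
    by blast
  then show "M \<in> {M \<in> matchings E. \<exists>e\<in>M. u \<in> e}"
    unfolding matchings_def del_edges_def by auto
qed

lemma matchings_Un:
  assumes "simple_graph V1 E1" "simple_graph V2 E2" "V1 \<inter> V2 = {}"
  shows "matchings (E1 \<union> E2) = (\<lambda>(a, b). a \<union> b) ` (matchings E1 \<times> matchings E2)"
proof (intro equalityI subsetI)
  fix M assume "M \<in> matchings (E1 \<union> E2)"
  then have "M \<inter> E1 \<in> matchings E1" "M \<inter> E2 \<in> matchings E2" "M = (M \<inter> E1) \<union> (M \<inter> E2)"
    unfolding matchings_def by auto
  then show "M \<in> (\<lambda>(a, b). a \<union> b) ` (matchings E1 \<times> matchings E2)"
    by (auto intro!: image_eqI[of _ _ "(M \<inter> E1, M \<inter> E2)"])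
next
  fix M assume "M \<in> (\<lambda>(a, b). a \<union> b) ` (matchings E1 \<times> matchings E2)"
  then obtain a b where M: "M = a \<union> b" and a: "a \<in> matchings E1" and b: "b \<in> matchings E2"
    by auto
  have disj: "e \<inter> e' = {} \<and> e' \<inter> e = {}" if "e \<in> a" "e' \<in> b" for e e'
  proof -
    have "e \<in> E1" "e' \<in> E2" using that a b unfolding matchings_def by auto
    then have "e \<subseteq> V1" "e' \<subseteq> V2" using assms(1,2) by (auto dest: simple_graph_edge_subset)
    then show ?thesis using assms(3) by blast
  qed
  show "M \<in> matchings (E1 \<union> E2)"
    unfolding matchings_def
  proof (intro CollectI conjI ballI impI)
    show "M \<subseteq> E1 \<union> E2" using a b unfolding M matchings_def by blast
    fix e e' assume "e \<in> M" "e' \<in> M" "e \<noteq> e'"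
    moreover have "\<forall>e\<in>a. \<forall>e'\<in>a. e \<noteq> e' \<longrightarrow> e \<inter> e' = {}"
      and "\<forall>e\<in>b. \<forall>e'\<in>b. e \<noteq> e' \<longrightarrow> e \<inter> e' = {}"
      using a b unfolding matchings_def by auto
    ultimately show "e \<inter> e' = {}" using disj unfolding M by (metis UnE)
  qed
qed

lemma inj_on_Un_matchings:
  assumes "simple_graph V1 E1" "simple_graph V2 E2" "V1 \<inter> V2 = {}"
  shows "inj_on (\<lambda>(a, b). a \<union> b) (matchings E1 \<times> matchings E2)"
proof (rule inj_onI, clarsimp)
  fix a b a' b'
  assume "a \<in> matchings E1" "a' \<in> matchings E1" "b \<in> matchings E2" "b' \<in> matchings E2"
  then have sub: "a \<subseteq> E1" "a' \<subseteq> E1" "b \<subseteq> E2" "b' \<subseteq> E2" unfolding matchings_def by auto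
  assume eq: "a \<union> b = a' \<union> b'"
  have "E1 \<inter> E2 = {}" using assms by (rule simple_graph_disjoint_edges)
  then have "a = (a \<union> b) \<inter> E1" "a' = (a' \<union> b') \<inter> E1" "b = (a \<union> b) \<inter> E2" "b' = (a' \<union> b') \<inter> E2"
    using sub by blast+
  then show "a = a' \<and> b = b'" using eq by metis
qed

definition matching_term :: "('v \<Rightarrow> 'a::comm_ring_1) \<Rightarrow> ('v set \<Rightarrow> 'a) \<Rightarrow> 'v set \<Rightarrow> 'v set set \<Rightarrow> 'a" where
  "matching_term f c V M = (-1) ^ card M * (\<Prod>e\<in>M. c e) * (\<Prod>v\<in>V - \<Union>M. f v)"

definition matching_poly :: "('v \<Rightarrow> 'a::comm_ring_1) \<Rightarrow> ('v set \<Rightarrow> 'a) \<Rightarrow> 'v set \<Rightarrow> 'v set set \<Rightarrow> 'a" where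
  "matching_poly f c V E = (\<Sum>M\<in>matchings E. matching_term f c V M)"

lemma matching_term_uncovered_vertex:
  assumes "finite V" "u \<in> V" "u \<notin> \<Union>M"
  shows "matching_term f c V M = f u * matching_term f c (V - {u}) M"
proof -
  have "V - \<Union>M = insert u (V - {u} - \<Union>M)" using assms(2,3) by auto
  then show ?thesis unfolding matching_term_def using assms(1) by (simp add: mult_ac)
qed

lemma matching_term_insert_edge:
  assumes "finite M" "{u, v} \<notin> M"
  shows "matching_term f c V (insert {u, v} M) = - (c {u, v} * matching_term f c (V - {u} - {v}) M)"
proof -
  have "V - \<Union>(insert {u, v} M) = V - {u} - {v} - \<Union>M" by auto
  then show ?thesis unfolding matching_term_def using assms by (simp add: mult_ac)
qed

lemma matching_term_Un:
  assumes "finite V1" "finite V2" "V1 \<inter> V2 = {}" "finite a" "finite b" "a \<inter> b = {}"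
    and "\<Union>a \<subseteq> V1" "\<Union>b \<subseteq> V2"
  shows "matching_term f c (V1 \<union> V2) (a \<union> b) = matching_term f c V1 a * matching_term f c V2 b"
proof -
  have "V1 \<union> V2 - \<Union>(a \<union> b) = (V1 - \<Union>a) \<union> (V2 - \<Union>b)" using assms(3,7,8) by blast
  moreover have "(\<Prod>v\<in>(V1 - \<Union>a) \<union> (V2 - \<Union>b). f v) = (\<Prod>v\<in>V1 - \<Union>a. f v) * (\<Prod>v\<in>V2 - \<Union>b. f v)"
    by (rule prod.union_disjoint) (use assms(1-3) in auto)
  ultimately show ?thesis
    unfolding matching_term_def using assms(4-6)
    by (simp add: card_Un_disjoint prod.union_disjoint power_add mult_ac)
qed

lemma matching_poly_empty: "matching_poly f c {} {} = 1"
  unfolding matching_poly_def matching_term_def matchings_empty by simp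

lemma sum_matching_term_avoiding:
  assumes "finite V" "u \<in> V"
  shows "sum (matching_term f c V) (matchings (del_edges E u))
       = f u * matching_poly f c (V - {u}) (del_edges E u)"
  unfolding matching_poly_def sum_distrib_left
proof (rule sum.cong[OF refl])
  fix M assume "M \<in> matchings (del_edges E u)"
  then have "u \<notin> \<Union>M" unfolding matchings_def del_edges_def by auto
  with assms show "matching_term f c V M = f u * matching_term f c (V - {u}) M"
    by (rule matching_term_uncovered_vertex)
qed

lemma sum_matching_term_insert_edge:
  assumes "finite E" "{u, v} \<notin> E"
  shows "sum (matching_term f c V) (insert {u, v} ` matchings E)
       = - (c {u, v} * matching_poly f c (V - {u} - {v}) E)"
proof -
  have not_in: "{u, v} \<notin> M" if "M \<in> matchings E" for M
    using that assms(2) unfolding matchings_def by auto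
  have "inj_on (insert {u, v}) (matchings E)"
    by (rule inj_onI) (simp add: insert_ident not_in)
  then have "sum (matching_term f c V) (insert {u, v} ` matchings E)
      = (\<Sum>M\<in>matchings E. matching_term f c V (insert {u, v} M))"
    by (simp add: sum.reindex)
  also have "\<dots> = (\<Sum>M\<in>matchings E. - (c {u, v} * matching_term f c (V - {u} - {v}) M))"
    using not_in matching_finite[OF assms(1)] by (simp add: matching_term_insert_edge)
  finally show ?thesis unfolding matching_poly_def by (simp add: sum_negf sum_distrib_left)
qed

lemma disjoint_insert_edge_matchings:
  assumes "{u, j} \<notin> E" "i \<noteq> j"
  shows "insert {u, i} ` matchings E \<inter> insert {u, j} ` matchings E' = {}"
proof -
  have "{u, j} \<notin> X" if X: "X \<in> insert {u, i} ` matchings E" for X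
  proof -
    obtain M where "M \<in> matchings E" "X = insert {u, i} M" using X by blast
    moreover have "{u, j} \<noteq> {u, i}" using assms(2) by (simp add: doubleton_eq_iff)
    ultimately show ?thesis using assms(1) unfolding matchings_def by auto
  qed
  moreover have "{u, j} \<in> X" if "X \<in> insert {u, j} ` matchings E'" for X using that by blast
  ultimately show ?thesis by (meson disjoint_iff)
qed

lemma matching_poly_delete_vertex:
  assumes sg: "simple_graph V E" and u: "u \<in> V"
  shows "matching_poly f c V E = f u * matching_poly f c (V - {u}) (del_edges E u)
     - (\<Sum>v\<in>{v. {u, v} \<in> E}. c {u, v} * matching_poly f c (V - {u} - {v}) (del_edges (del_edges E u) v))"
proof -
  define N where "N = {v. {u, v} \<in> E}"
  define E' where "E' v = del_edges (del_edges E u) v" for v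
  have finV: "finite V" using sg by (rule simple_graph_finite_verts)
  have finE: "finite E" using sg by (rule simple_graph_finite_edges)
  have finN: "finite N"
  proof (rule finite_subset[OF _ finV])
    show "N \<subseteq> V" using simple_graph_neighbour[OF sg] by (auto simp: N_def)
  qed
  have finE': "finite (E' v)" for v using finE by (simp add: E'_def)
  let ?avoiding = "matchings (del_edges E u)"
  let ?covering = "\<lambda>v. insert {u, v} ` matchings (E' v)"
  have "matchings E = {M \<in> matchings E. \<forall>e\<in>M. u \<notin> e} \<union> {M \<in> matchings E. \<exists>e\<in>M. u \<in> e}"
    by auto
  then have split: "matchings E = ?avoiding \<union> (\<Union>v\<in>N. ?covering v)"
    unfolding matchings_avoiding_vertex matchings_covering_vertex[OF sg] N_def E'_def .
  have "{M \<in> matchings E. \<forall>e\<in>M. u \<notin> e} \<inter> {M \<in> matchings E. \<exists>e\<in>M. u \<in> e} = {}"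
    by auto
  then have split_disjoint: "?avoiding \<inter> (\<Union>v\<in>N. ?covering v) = {}"
    unfolding matchings_avoiding_vertex matchings_covering_vertex[OF sg] N_def E'_def .
  have avoiding: "sum (matching_term f c V) ?avoiding = f u * matching_poly f c (V - {u}) (del_edges E u)"
    using finV u by (rule sum_matching_term_avoiding)
  have covering: "sum (matching_term f c V) (?covering v)
      = - (c {u, v} * matching_poly f c (V - {u} - {v}) (E' v))" for v
    using finE' by (rule sum_matching_term_insert_edge) (simp add: E'_def del_edges_def)
  have covering_disjoint: "?covering i \<inter> ?covering j = {}" if "i \<noteq> j" for i j
    by (rule disjoint_insert_edge_matchings) (simp_all add: E'_def del_edges_def that)
  have "matching_poly f c V E = sum (matching_term f c V) ?avoiding + sum (matching_term f c V) (\<Union>v\<in>N. ?covering v)"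
    unfolding matching_poly_def split
    by (rule sum.union_disjoint) (use finE finE' finN split_disjoint in \<open>simp_all add: finite_matchings\<close>)
  also have "sum (matching_term f c V) (\<Union>v\<in>N. ?covering v) = (\<Sum>v\<in>N. sum (matching_term f c V) (?covering v))"
    by (rule sum.UNION_disjoint) (use finN finE' covering_disjoint in \<open>simp_all add: finite_matchings\<close>)
  finally show ?thesis unfolding avoiding covering by (simp add: sum_negf N_def E'_def)
qed

lemma matching_poly_Un:
  assumes sg1: "simple_graph V1 E1" and sg2: "simple_graph V2 E2" and disj: "V1 \<inter> V2 = {}"
  shows "matching_poly f c (V1 \<union> V2) (E1 \<union> E2) = matching_poly f c V1 E1 * matching_poly f c V2 E2"
proof -
  let ?U = "\<lambda>(a, b). a \<union> b"
  have fin: "finite V1" "finite V2" "finite E1" "finite E2"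
    using sg1 sg2 by (simp_all add: simple_graph_finite_verts simple_graph_finite_edges)
  have term_Un: "matching_term f c (V1 \<union> V2) (a \<union> b) = matching_term f c V1 a * matching_term f c V2 b"
    if a: "a \<in> matchings E1" and b: "b \<in> matchings E2" for a b
  proof (rule matching_term_Un)
    have "a \<subseteq> E1" "b \<subseteq> E2" using a b unfolding matchings_def by auto
    then show "\<Union>a \<subseteq> V1" "\<Union>b \<subseteq> V2"
      using sg1 sg2 by (auto dest: simple_graph_edge_subset)
    show "a \<inter> b = {}"
      using simple_graph_disjoint_edges[OF sg1 sg2 disj] \<open>a \<subseteq> E1\<close> \<open>b \<subseteq> E2\<close> by blast
  qed (use fin a b matching_finite disj in auto)
  have "matching_poly f c V1 E1 * matching_poly f c V2 E2
      = (\<Sum>(a, b)\<in>matchings E1 \<times> matchings E2. matching_term f c V1 a * matching_term f c V2 b)"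
    unfolding matching_poly_def sum_product sum.cartesian_product ..
  also have "\<dots> = (\<Sum>(a, b)\<in>matchings E1 \<times> matchings E2. matching_term f c (V1 \<union> V2) (a \<union> b))"
    by (rule sum.cong) (auto simp: term_Un)
  also have "\<dots> = sum (matching_term f c (V1 \<union> V2)) (?U ` (matchings E1 \<times> matchings E2))"
    by (subst sum.reindex[OF inj_on_Un_matchings[OF sg1 sg2 disj]]) (simp add: comp_def case_prod_unfold)
  also have "\<dots> = matching_poly f c (V1 \<union> V2) (E1 \<union> E2)"
    unfolding matching_poly_def matchings_Un[OF sg1 sg2 disj] ..
  finally show ?thesis ..
qed

lemma matching_poly_UN:
  assumes "finite I" "\<And>i. i \<in> I \<Longrightarrow> simple_graph (V i) (E i)"
    and "\<And>i j. i \<in> I \<Longrightarrow> j \<in> I \<Longrightarrow> i \<noteq> j \<Longrightarrow> V i \<inter> V j = {}"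
  shows "matching_poly f c (\<Union>i\<in>I. V i) (\<Union>i\<in>I. E i) = (\<Prod>i\<in>I. matching_poly f c (V i) (E i))"
  using assms
proof (induction I rule: finite_induct)
  case empty
  then show ?case by (simp add: matching_poly_empty)
next
  case (insert i I)
  have "matching_poly f c (V i \<union> (\<Union>j\<in>I. V j)) (E i \<union> (\<Union>j\<in>I. E j))
      = matching_poly f c (V i) (E i) * matching_poly f c (\<Union>j\<in>I. V j) (\<Union>j\<in>I. E j)"
    by (rule matching_poly_Un) (use insert in \<open>auto intro: simple_graph_UN\<close>)
  then show ?case using insert by simp
qed

lemma sum_supersets_eq_prod_diff:
  fixes a :: "'v \<Rightarrow> 'a::comm_ring_1"
  assumes finV: "finite V" and KV: "K \<subseteq> V"
  shows "(\<Sum>S\<in>{S \<in> Pow V. K \<subseteq> S}. (-1) ^ card (V - S) * (\<Prod>v\<in>V - S. a v) * x ^ (card S - card K))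
       = (\<Prod>v\<in>V - K. x - a v)"
proof -
  define U where "U = V - K"
  have finK: "finite K" using finV KV by (rule finite_subset[rotated])
  have finU: "finite U" using finV by (simp add: U_def)
  have "{S \<in> Pow V. K \<subseteq> S} = (\<lambda>R. K \<union> R) ` Pow U"
  proof (intro equalityI subsetI)
    fix S assume "S \<in> {S \<in> Pow V. K \<subseteq> S}"
    then have "S = K \<union> (S - K)" "S - K \<in> Pow U" unfolding U_def by auto
    then show "S \<in> (\<lambda>R. K \<union> R) ` Pow U" by blast
  qed (use KV in \<open>auto simp: U_def\<close>)
  moreover have "inj_on (\<lambda>R. K \<union> R) (Pow U)"
    by (rule inj_onI) (auto simp: U_def)
  ultimately have "(\<Sum>S\<in>{S \<in> Pow V. K \<subseteq> S}. (-1) ^ card (V - S) * (\<Prod>v\<in>V - S. a v) * x ^ (card S - card K))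
      = (\<Sum>R\<in>Pow U. (-1) ^ card (V - (K \<union> R)) * (\<Prod>v\<in>V - (K \<union> R). a v) * x ^ (card (K \<union> R) - card K))"
    by (simp add: sum.reindex)
  also have "\<dots> = (\<Sum>R\<in>Pow U. (\<Prod>v\<in>R. x) * (\<Prod>v\<in>U - R. - a v))"
  proof (rule sum.cong[OF refl])
    fix R assume R: "R \<in> Pow U"
    have "finite R" using R finU by (auto intro: finite_subset)
    have "V - (K \<union> R) = U - R" using R by (auto simp: U_def)
    moreover have "card (K \<union> R) = card K + card R"
      by (rule card_Un_disjoint) (use finK \<open>finite R\<close> R in \<open>auto simp: U_def\<close>)
    ultimately
    show "(-1) ^ card (V - (K \<union> R)) * (\<Prod>v\<in>V - (K \<union> R). a v) * x ^ (card (K \<union> R) - card K)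
        = (\<Prod>v\<in>R. x) * (\<Prod>v\<in>U - R. - a v)"
      by (simp add: prod_uminus mult_ac)
  qed
  also have "\<dots> = (\<Prod>v\<in>U. x + - a v)"
    by (rule prod_add[OF finU, symmetric])
  finally show ?thesis by (simp add: U_def)
qed

lemma eta_eq_matching_poly:
  assumes sg: "simple_graph V E"
  shows "eta w w1 V E x = matching_poly (\<lambda>v. x - w1 v) (\<lambda>e. (cmod (w e))\<^sup>2) V E"
proof -
  have finV: "finite V" using sg by (rule simple_graph_finite_verts)
  have finE: "finite E" using sg by (rule simple_graph_finite_edges)
  define g where "g S M = (-1::real) ^ card (V - S) * (\<Prod>v\<in>V - S. w1 v) *
       ((-1) ^ card M * (cmod (\<Prod>e\<in>M. w e))\<^sup>2 * x ^ (card S - 2 * card M))" for S M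
  have "eta w w1 V E x = (\<Sum>S\<in>Pow V. \<Sum>M\<in>{M \<in> matchings E. \<Union>M \<subseteq> S}. g S M)"
    unfolding eta_def mu_w_def matchings_induced_edges g_def by (simp add: sum_distrib_left)
  also have "\<dots> = (\<Sum>M\<in>matchings E. \<Sum>S\<in>{S \<in> Pow V. \<Union>M \<subseteq> S}. g S M)"
    by (rule sum.swap_restrict) (use finV finite_matchings[OF finE] in auto)
  also have "\<dots> = matching_poly (\<lambda>v. x - w1 v) (\<lambda>e. (cmod (w e))\<^sup>2) V E"
    unfolding matching_poly_def
  proof (rule sum.cong[OF refl])
    fix M assume M: "M \<in> matchings E"
    have "\<Union>M \<subseteq> V" using M sg unfolding matchings_def by (auto dest: simple_graph_edge_subset)
    have "(\<Sum>S\<in>{S \<in> Pow V. \<Union>M \<subseteq> S}. g S M) = (-1) ^ card M * (cmod (\<Prod>e\<in>M. w e))\<^sup>2 *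
        (\<Sum>S\<in>{S \<in> Pow V. \<Union>M \<subseteq> S}. (-1) ^ card (V - S) * (\<Prod>v\<in>V - S. w1 v) * x ^ (card S - card (\<Union>M)))"
      unfolding g_def card_Union_matching[OF sg M] sum_distrib_left by (simp add: mult_ac)
    also have "\<dots> = (-1) ^ card M * (cmod (\<Prod>e\<in>M. w e))\<^sup>2 * (\<Prod>v\<in>V - \<Union>M. x - w1 v)"
      unfolding sum_supersets_eq_prod_diff[OF finV \<open>\<Union>M \<subseteq> V\<close>] ..
    also have "\<dots> = matching_term (\<lambda>v. x - w1 v) (\<lambda>e. (cmod (w e))\<^sup>2) V M"
      unfolding matching_term_def by (simp add: prod_norm[symmetric] prod_power_distrib)
    finally show "(\<Sum>S\<in>{S \<in> Pow V. \<Union>M \<subseteq> S}. g S M) = matching_term (\<lambda>v. x - w1 v) (\<lambda>e. (cmod (w e))\<^sup>2) V M" .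
  qed
  finally show ?thesis .
qed

lemma gpaths_successively:
  "gpaths V E u = {p. p \<noteq> [] \<and> hd p = u \<and> distinct p \<and> set p \<subseteq> V \<and> successively (\<lambda>a b. {a, b} \<in> E) p}"
  unfolding gpaths_def successively_conv_nth ..

lemma gpaths_hd: "p \<in> gpaths V E u \<Longrightarrow> p = u # tl p"
  unfolding gpaths_def by (cases p) auto

lemma gpaths_nonempty_hd: "p \<in> gpaths V E u \<Longrightarrow> p \<noteq> [] \<and> hd p = u"
  unfolding gpaths_def by simp

lemma gpaths_single: "[u] \<in> gpaths V E u \<longleftrightarrow> u \<in> V"
  unfolding gpaths_def by simp

lemma Cons_in_gpaths:
  assumes "u \<in> V"
  shows "u # q \<in> gpaths V E u \<longleftrightarrow> q = [] \<or> {u, hd q} \<in> E \<and> q \<in> gpaths (V - {u}) (del_edges E u) (hd q)"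
proof -
  have "successively (\<lambda>a b. {a, b} \<in> del_edges E u) q \<longleftrightarrow> successively (\<lambda>a b. {a, b} \<in> E) q"
    if "u \<notin> set q"
    using that by (intro successively_cong) (auto simp: del_edges_def)
  then show ?thesis
    using assms by (cases q) (auto simp: gpaths_successively)
qed

lemma finite_gpaths: "finite V \<Longrightarrow> finite (gpaths V E u)"
  by (rule finite_subset[OF _ finite_subset_distinct[of V]]) (auto simp: gpaths_def)

lemma gpaths_decomp:
  assumes "u \<in> V"
  shows "gpaths V E u = insert [u] (\<Union>v\<in>{v. {u, v} \<in> E}. (#) u ` gpaths (V - {u}) (del_edges E u) v)"
proof (intro equalityI subsetI)
  fix p assume p: "p \<in> gpaths V E u"
  then have "p = u # tl p" by (rule gpaths_hd)
  with p show "p \<in> insert [u] (\<Union>v\<in>{v. {u, v} \<in> E}. (#) u ` gpaths (V - {u}) (del_edges E u) v)"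
    using Cons_in_gpaths[OF assms, of "tl p" E] by (metis (mono_tags, lifting) UN_iff image_eqI insertCI mem_Collect_eq)
next
  fix p assume "p \<in> insert [u] (\<Union>v\<in>{v. {u, v} \<in> E}. (#) u ` gpaths (V - {u}) (del_edges E u) v)"
  then show "p \<in> gpaths V E u"
    using Cons_in_gpaths[OF assms] gpaths_single assms gpaths_nonempty_hd by fastforce
qed

text \<open>
  Path trees with every vertex prefixed by \<open>pre\<close>: the subtree of \<open>T(G, u)\<close> below the
  child \<open>[u, v]\<close> is \<open>path_tree_verts [u] (V - {u}) (del_edges E u) v\<close>.
\<close>

definition path_tree_verts :: "'v list \<Rightarrow> 'v set \<Rightarrow> 'v set set \<Rightarrow> 'v \<Rightarrow> 'v list set" where
  "path_tree_verts pre V E u = (\<lambda>p. pre @ p) ` gpaths V E u"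

definition path_tree_edges :: "'v list \<Rightarrow> 'v set \<Rightarrow> 'v set set \<Rightarrow> 'v \<Rightarrow> 'v list set set" where
  "path_tree_edges pre V E u =
     {{pre @ p, pre @ p @ [y]} | p y. p \<in> gpaths V E u \<and> p @ [y] \<in> gpaths V E u}"

lemma simple_graph_path_tree:
  assumes "finite V"
  shows "simple_graph (path_tree_verts pre V E u) (path_tree_edges pre V E u)"
  unfolding simple_graph_def
proof (intro conjI ballI)
  show "finite (path_tree_verts pre V E u)"
    unfolding path_tree_verts_def using finite_gpaths[OF assms] by simp
  fix e assume "e \<in> path_tree_edges pre V E u"
  then obtain p y where "e = {pre @ p, pre @ p @ [y]}" "p \<in> gpaths V E u" "p @ [y] \<in> gpaths V E u"
    unfolding path_tree_edges_def by blast
  then show "\<exists>a b. a \<noteq> b \<and> a \<in> path_tree_verts pre V E u \<and> b \<in> path_tree_verts pre V E u \<and> e = {a, b}"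
    unfolding path_tree_verts_def by (intro exI[of _ "pre @ p"] exI[of _ "pre @ p @ [y]"]) auto
qed

lemma path_tree_verts_prefix: "x \<in> path_tree_verts pre V E u \<Longrightarrow> \<exists>q. x = pre @ u # q"
  unfolding path_tree_verts_def using gpaths_hd by fastforce

lemma path_tree_verts_disjoint:
  "v \<noteq> v' \<Longrightarrow> path_tree_verts pre V E v \<inter> path_tree_verts pre V' E' v' = {}"
  using path_tree_verts_prefix by (metis disjoint_iff list.inject same_append_eq)

lemma prefix_notin_path_tree_verts: "pre \<notin> path_tree_verts pre V E u"
  using path_tree_verts_prefix by fastforce

lemma root_in_path_tree_verts: "u \<in> V \<Longrightarrow> pre @ [u] \<in> path_tree_verts pre V E u"
  unfolding path_tree_verts_def using gpaths_single[of u V E] by blast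

lemma path_tree_verts_decomp:
  assumes "u \<in> V"
  shows "path_tree_verts pre V E u = insert (pre @ [u])
           (\<Union>v\<in>{v. {u, v} \<in> E}. path_tree_verts (pre @ [u]) (V - {u}) (del_edges E u) v)"
  unfolding path_tree_verts_def gpaths_decomp[OF assms] by (simp add: image_UN image_image)

lemma path_tree_edge_cases:
  assumes "u \<in> V" "e \<in> path_tree_edges pre V E u"
  obtains v where "{u, v} \<in> E" "e = {pre @ [u], pre @ [u, v]}"
    | v where "{u, v} \<in> E" "e \<in> path_tree_edges (pre @ [u]) (V - {u}) (del_edges E u) v"
proof -
  obtain p y where e: "e = {pre @ p, pre @ p @ [y]}" "p \<in> gpaths V E u" "p @ [y] \<in> gpaths V E u"
    using assms(2) unfolding path_tree_edges_def by blast
  define q where "q = tl p"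
  have p: "p = u # q" using gpaths_hd[OF e(2)] by (simp add: q_def)
  show thesis
  proof (cases "q = []")
    case True
    then have "{u, y} \<in> E" using e(3) Cons_in_gpaths[OF assms(1), of "[y]" E] p by simp
    then show thesis using that(1) e(1) p True by simp
  next
    case False
    then have "{u, hd q} \<in> E" "q \<in> gpaths (V - {u}) (del_edges E u) (hd q)"
        "q @ [y] \<in> gpaths (V - {u}) (del_edges E u) (hd q)"
      using e(2,3) p Cons_in_gpaths[OF assms(1), of q E] Cons_in_gpaths[OF assms(1), of "q @ [y]" E] by auto
    moreover have "e = {(pre @ [u]) @ q, (pre @ [u]) @ q @ [y]}" using e(1) p by simp
    ultimately show thesis using that(2) unfolding path_tree_edges_def by blast
  qed
qed

lemma path_tree_edges_decomp:
  assumes "u \<in> V" "simple_graph V E"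
  shows "path_tree_edges pre V E u = (\<lambda>v. {pre @ [u], pre @ [u, v]}) ` {v. {u, v} \<in> E}
           \<union> (\<Union>v\<in>{v. {u, v} \<in> E}. path_tree_edges (pre @ [u]) (V - {u}) (del_edges E u) v)"
proof (intro equalityI subsetI)
  fix e assume "e \<in> path_tree_edges pre V E u"
  with assms(1) show "e \<in> (\<lambda>v. {pre @ [u], pre @ [u, v]}) ` {v. {u, v} \<in> E}
           \<union> (\<Union>v\<in>{v. {u, v} \<in> E}. path_tree_edges (pre @ [u]) (V - {u}) (del_edges E u) v)"
    by (cases rule: path_tree_edge_cases) auto
next
  fix e assume "e \<in> (\<lambda>v. {pre @ [u], pre @ [u, v]}) ` {v. {u, v} \<in> E}
           \<union> (\<Union>v\<in>{v. {u, v} \<in> E}. path_tree_edges (pre @ [u]) (V - {u}) (del_edges E u) v)"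
  then consider v where "{u, v} \<in> E" "e = {pre @ [u], pre @ [u] @ [v]}"
    | v q y where "{u, v} \<in> E" "e = {pre @ (u # q), pre @ (u # q) @ [y]}"
        "q \<in> gpaths (V - {u}) (del_edges E u) v" "q @ [y] \<in> gpaths (V - {u}) (del_edges E u) v"
    unfolding path_tree_edges_def by auto
  then show "e \<in> path_tree_edges pre V E u"
  proof cases
    case (1 v)
    then have "[u] \<in> gpaths V E u" "[u] @ [v] \<in> gpaths V E u"
      using assms Cons_in_gpaths[OF assms(1), of "[v]" E] simple_graph_neighbour[OF assms(2)]
      by (auto simp: gpaths_single)
    then show ?thesis unfolding path_tree_edges_def using 1(2) by blast
  next
    case (2 v q y)
    then have "u # q \<in> gpaths V E u" "(u # q) @ [y] \<in> gpaths V E u"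
      using Cons_in_gpaths[OF assms(1)] gpaths_nonempty_hd by (metis append_Cons)+
    then show ?thesis unfolding path_tree_edges_def using 2(2) by blast
  qed
qed

lemma tree_w_append:
  assumes "a \<noteq> []"
  shows "tree_w w {a, a @ [y]} = w {last a, y}"
proof -
  have "(THE q. q \<in> {a, a @ [y]} \<and> q \<noteq> [] \<and> butlast q \<in> {a, a @ [y]}) = a @ [y]"
  proof (rule the_equality)
    fix q assume q: "q \<in> {a, a @ [y]} \<and> q \<noteq> [] \<and> butlast q \<in> {a, a @ [y]}"
    have "length (butlast a) < length a" "length a < length (a @ [y])" using assms by simp_all
    then have "butlast a \<notin> {a, a @ [y]}" by (auto dest: arg_cong[where f = length])
    then show "q = a @ [y]" using q by auto
  qed simp
  then show ?thesis unfolding tree_w_def Let_def by simp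
qed

lemma del_edges_join_root:
  assumes "\<And>v. v \<in> N \<Longrightarrow> simple_graph (T v) (Te v)" "\<And>v. v \<in> N \<Longrightarrow> r \<notin> T v"
  shows "del_edges ((\<lambda>v. {r, s v}) ` N \<union> (\<Union>v\<in>N. Te v)) r = (\<Union>v\<in>N. Te v)"
  using assms simple_graph_edge_subset unfolding del_edges_def by fastforce

lemma join_root_neighbours:
  assumes sg: "\<And>v. v \<in> N \<Longrightarrow> simple_graph (T v) (Te v)"
    and root: "\<And>v. v \<in> N \<Longrightarrow> r \<notin> T v" and child: "\<And>v. v \<in> N \<Longrightarrow> s v \<in> T v"
  shows "{q. {r, q} \<in> (\<lambda>v. {r, s v}) ` N \<union> (\<Union>v\<in>N. Te v)} = s ` N"
proof (intro equalityI subsetI)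
  fix q assume "q \<in> {q. {r, q} \<in> (\<lambda>v. {r, s v}) ` N \<union> (\<Union>v\<in>N. Te v)}"
  moreover have "{r, q} \<notin> Te v" if "v \<in> N" for v
    using simple_graph_edge_subset[OF sg[OF that]] root[OF that] by blast
  ultimately obtain v where "v \<in> N" "{r, q} = {r, s v}" by blast
  moreover from this have "s v \<noteq> r" using child root by metis
  ultimately show "q \<in> s ` N" by (auto simp: doubleton_eq_iff)
qed auto

lemma join_root_delete_child:
  assumes sg: "\<And>v. v \<in> N \<Longrightarrow> simple_graph (T v) (Te v)"
    and disj: "\<And>v v'. v \<in> N \<Longrightarrow> v' \<in> N \<Longrightarrow> v \<noteq> v' \<Longrightarrow> T v \<inter> T v' = {}"
    and child: "\<And>v. v \<in> N \<Longrightarrow> s v \<in> T v" and v: "v \<in> N"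
  shows "(\<Union>v\<in>N. T v) - {s v} = (T v - {s v}) \<union> (\<Union>v'\<in>N - {v}. T v')"
    and "del_edges (\<Union>v\<in>N. Te v) (s v) = del_edges (Te v) (s v) \<union> (\<Union>v'\<in>N - {v}. Te v')"
proof -
  have notin: "s v \<notin> T v'" if "v' \<in> N" "v' \<noteq> v" for v'
    using child disj that v by blast
  then show "(\<Union>v\<in>N. T v) - {s v} = (T v - {s v}) \<union> (\<Union>v'\<in>N - {v}. T v')"
    using v by auto
  have "s v \<notin> e" if "v' \<in> N" "v' \<noteq> v" "e \<in> Te v'" for v' e
    using simple_graph_edge_subset[OF sg[OF that(1)] that(3)] notin[OF that(1,2)] by blast
  then show "del_edges (\<Union>v\<in>N. Te v) (s v) = del_edges (Te v) (s v) \<union> (\<Union>v'\<in>N - {v}. Te v')"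
    using v unfolding del_edges_def by blast
qed

lemma simple_graph_join_root:
  assumes "finite N" "\<And>v. v \<in> N \<Longrightarrow> simple_graph (T v) (Te v)"
    and "\<And>v. v \<in> N \<Longrightarrow> r \<notin> T v" "\<And>v. v \<in> N \<Longrightarrow> s v \<in> T v"
  shows "simple_graph (insert r (\<Union>v\<in>N. T v)) ((\<lambda>v. {r, s v}) ` N \<union> (\<Union>v\<in>N. Te v))"
  unfolding simple_graph_def
proof (intro conjI ballI)
  have sg: "simple_graph (\<Union>v\<in>N. T v) (\<Union>v\<in>N. Te v)" using assms(1,2) by (rule simple_graph_UN)
  then show "finite (insert r (\<Union>v\<in>N. T v))" by (simp add: simple_graph_finite_verts)
  fix e assume "e \<in> (\<lambda>v. {r, s v}) ` N \<union> (\<Union>v\<in>N. Te v)"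
  then consider v where "v \<in> N" "e = {r, s v}" | "e \<in> (\<Union>v\<in>N. Te v)" by blast
  then show "\<exists>a b. a \<noteq> b \<and> a \<in> insert r (\<Union>v\<in>N. T v) \<and> b \<in> insert r (\<Union>v\<in>N. T v) \<and> e = {a, b}"
  proof cases
    case (1 v)
    then have "r \<noteq> s v" "s v \<in> (\<Union>v\<in>N. T v)" using assms(3,4) by fastforce+
    then show ?thesis using 1(2) by blast
  next
    case 2
    then obtain a b where "a \<noteq> b" "a \<in> (\<Union>v\<in>N. T v)" "b \<in> (\<Union>v\<in>N. T v)" "e = {a, b}"
      using sg by (meson simple_graph_edgeE)
    then show ?thesis by blast
  qed
qed

lemma matching_poly_join_root:
  assumes finN: "finite N"
    and sg: "\<And>v. v \<in> N \<Longrightarrow> simple_graph (T v) (Te v)"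
    and disj: "\<And>v v'. v \<in> N \<Longrightarrow> v' \<in> N \<Longrightarrow> v \<noteq> v' \<Longrightarrow> T v \<inter> T v' = {}"
    and root: "\<And>v. v \<in> N \<Longrightarrow> r \<notin> T v"
    and child: "\<And>v. v \<in> N \<Longrightarrow> s v \<in> T v"
  shows "matching_poly f c (insert r (\<Union>v\<in>N. T v)) ((\<lambda>v. {r, s v}) ` N \<union> (\<Union>v\<in>N. Te v))
       = f r * (\<Prod>v\<in>N. matching_poly f c (T v) (Te v))
         - (\<Sum>v\<in>N. c {r, s v} * matching_poly f c (T v - {s v}) (del_edges (Te v) (s v))
              * (\<Prod>v'\<in>N - {v}. matching_poly f c (T v') (Te v')))"
proof -
  let ?V = "insert r (\<Union>v\<in>N. T v)" and ?E = "(\<lambda>v. {r, s v}) ` N \<union> (\<Union>v\<in>N. Te v)"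
  have sg_UN: "simple_graph (\<Union>v\<in>A. T v) (\<Union>v\<in>A. Te v)" if "A \<subseteq> N" for A
    using finN sg that by (intro simple_graph_UN) (auto intro: finite_subset)
  have sg_join: "simple_graph ?V ?E"
    using finN sg root child by (rule simple_graph_join_root)
  have del_r: "?V - {r} = (\<Union>v\<in>N. T v)" using root by auto
  have del_r_edges: "del_edges ?E r = (\<Union>v\<in>N. Te v)"
    using sg root by (rule del_edges_join_root)
  have nbrs: "{q. {r, q} \<in> ?E} = s ` N"
    using sg root child by (rule join_root_neighbours)
  have "inj_on s N" using child disj by (metis disjoint_iff inj_onI)
  have del_s: "?V - {r} - {s v} = (T v - {s v}) \<union> (\<Union>v'\<in>N - {v}. T v')"
    "del_edges (del_edges ?E r) (s v) = del_edges (Te v) (s v) \<union> (\<Union>v'\<in>N - {v}. Te v')"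
    if "v \<in> N" for v
  proof -
    show "?V - {r} - {s v} = (T v - {s v}) \<union> (\<Union>v'\<in>N - {v}. T v')"
      unfolding del_r using sg disj child that by (rule join_root_delete_child(1))
    show "del_edges (del_edges ?E r) (s v) = del_edges (Te v) (s v) \<union> (\<Union>v'\<in>N - {v}. Te v')"
      unfolding del_r_edges using sg disj child that by (rule join_root_delete_child(2))
  qed
  have del_s_poly: "matching_poly f c (?V - {r} - {s v}) (del_edges (del_edges ?E r) (s v))
      = matching_poly f c (T v - {s v}) (del_edges (Te v) (s v)) * (\<Prod>v'\<in>N - {v}. matching_poly f c (T v') (Te v'))"
    if "v \<in> N" for v
  proof -
    have "matching_poly f c (?V - {r} - {s v}) (del_edges (del_edges ?E r) (s v))
        = matching_poly f c (T v - {s v}) (del_edges (Te v) (s v))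
          * matching_poly f c (\<Union>v'\<in>N - {v}. T v') (\<Union>v'\<in>N - {v}. Te v')"
      unfolding del_s[OF that]
      by (rule matching_poly_Un) (use sg[OF that] sg_UN disj that in \<open>auto intro: simple_graph_del_edges\<close>)
    also have "matching_poly f c (\<Union>v'\<in>N - {v}. T v') (\<Union>v'\<in>N - {v}. Te v')
        = (\<Prod>v'\<in>N - {v}. matching_poly f c (T v') (Te v'))"
      by (rule matching_poly_UN) (use finN sg disj in auto)
    finally show ?thesis .
  qed
  have del_r_poly: "matching_poly f c (?V - {r}) (del_edges ?E r) = (\<Prod>v\<in>N. matching_poly f c (T v) (Te v))"
    unfolding del_r del_r_edges by (rule matching_poly_UN) (use finN sg disj in auto)
  have "matching_poly f c ?V ?E = f r * matching_poly f c (?V - {r}) (del_edges ?E r)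
      - (\<Sum>q\<in>s ` N. c {r, q} * matching_poly f c (?V - {r} - {q}) (del_edges (del_edges ?E r) q))"
    using matching_poly_delete_vertex[OF sg_join insertI1] unfolding nbrs .
  also have "\<dots> = f r * (\<Prod>v\<in>N. matching_poly f c (T v) (Te v))
      - (\<Sum>v\<in>N. c {r, s v} * matching_poly f c (?V - {r} - {s v}) (del_edges (del_edges ?E r) (s v)))"
    unfolding del_r_poly sum.reindex[OF \<open>inj_on s N\<close>] comp_def ..
  also have "(\<Sum>v\<in>N. c {r, s v} * matching_poly f c (?V - {r} - {s v}) (del_edges (del_edges ?E r) (s v)))
      = (\<Sum>v\<in>N. c {r, s v} * matching_poly f c (T v - {s v}) (del_edges (Te v) (s v))
              * (\<Prod>v'\<in>N - {v}. matching_poly f c (T v') (Te v')))"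
    by (rule sum.cong[OF refl]) (simp only: del_s_poly mult.assoc)
  finally show ?thesis .
qed

lemma matching_poly_path_tree_root:
  assumes sg: "simple_graph V E" and u: "u \<in> V"
    and cT: "\<And>y. cT {pre @ [u], pre @ [u, y]} = c {u, y}"
  defines "N \<equiv> {v. {u, v} \<in> E}"
    and "T \<equiv> \<lambda>v. path_tree_verts (pre @ [u]) (V - {u}) (del_edges E u) v"
    and "Te \<equiv> \<lambda>v. path_tree_edges (pre @ [u]) (V - {u}) (del_edges E u) v"
  shows "matching_poly (f \<circ> last) cT (path_tree_verts pre V E u - {pre @ [u]})
           (del_edges (path_tree_edges pre V E u) (pre @ [u]))
       = (\<Prod>v\<in>N. matching_poly (f \<circ> last) cT (T v) (Te v))"
    and "matching_poly (f \<circ> last) cT (path_tree_verts pre V E u) (path_tree_edges pre V E u)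
       = f u * (\<Prod>v\<in>N. matching_poly (f \<circ> last) cT (T v) (Te v))
         - (\<Sum>v\<in>N. c {u, v} * matching_poly (f \<circ> last) cT (T v - {pre @ [u, v]})
                (del_edges (Te v) (pre @ [u, v]))
              * (\<Prod>v'\<in>N - {v}. matching_poly (f \<circ> last) cT (T v') (Te v')))"
proof -
  have N_sub: "N \<subseteq> V - {u}" using simple_graph_neighbour[OF sg] by (auto simp: N_def)
  have finN: "finite N" using N_sub simple_graph_finite_verts[OF sg] by (auto intro: finite_subset)
  have sgT: "simple_graph (T v) (Te v)" for v
    unfolding T_def Te_def using simple_graph_finite_verts[OF sg] by (simp add: simple_graph_path_tree)
  have disj: "T v \<inter> T v' = {}" if "v \<noteq> v'" for v v'
    unfolding T_def using that by (rule path_tree_verts_disjoint)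
  have root: "pre @ [u] \<notin> T v" for v
    unfolding T_def by (rule prefix_notin_path_tree_verts)
  have child: "pre @ [u, v] \<in> T v" if "v \<in> N" for v
    using root_in_path_tree_verts[of v "V - {u}" "pre @ [u]"] that N_sub unfolding T_def by auto
  have verts: "path_tree_verts pre V E u = insert (pre @ [u]) (\<Union>v\<in>N. T v)"
    unfolding N_def T_def by (rule path_tree_verts_decomp[OF u])
  have edges: "path_tree_edges pre V E u = (\<lambda>v. {pre @ [u], pre @ [u, v]}) ` N \<union> (\<Union>v\<in>N. Te v)"
    unfolding N_def Te_def by (rule path_tree_edges_decomp[OF u sg])
  show "matching_poly (f \<circ> last) cT (path_tree_verts pre V E u - {pre @ [u]})
           (del_edges (path_tree_edges pre V E u) (pre @ [u]))
       = (\<Prod>v\<in>N. matching_poly (f \<circ> last) cT (T v) (Te v))"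
    unfolding verts edges del_edges_join_root[OF sgT root] using root
    by (simp add: matching_poly_UN finN sgT disj)
  have "matching_poly (f \<circ> last) cT (insert (pre @ [u]) (\<Union>v\<in>N. T v))
          ((\<lambda>v. {pre @ [u], pre @ [u, v]}) ` N \<union> (\<Union>v\<in>N. Te v))
      = (f \<circ> last) (pre @ [u]) * (\<Prod>v\<in>N. matching_poly (f \<circ> last) cT (T v) (Te v))
        - (\<Sum>v\<in>N. cT {pre @ [u], pre @ [u, v]} * matching_poly (f \<circ> last) cT (T v - {pre @ [u, v]})
               (del_edges (Te v) (pre @ [u, v]))
             * (\<Prod>v'\<in>N - {v}. matching_poly (f \<circ> last) cT (T v') (Te v')))"
    by (rule matching_poly_join_root) (use finN sgT disj root child in auto)
  then show "matching_poly (f \<circ> last) cT (path_tree_verts pre V E u) (path_tree_edges pre V E u)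
       = f u * (\<Prod>v\<in>N. matching_poly (f \<circ> last) cT (T v) (Te v))
         - (\<Sum>v\<in>N. c {u, v} * matching_poly (f \<circ> last) cT (T v - {pre @ [u, v]})
                (del_edges (Te v) (pre @ [u, v]))
              * (\<Prod>v'\<in>N - {v}. matching_poly (f \<circ> last) cT (T v') (Te v')))"
    unfolding verts edges by (simp add: cT)
qed

lemma matching_poly_path_tree:
  assumes "simple_graph V E" "u \<in> V"
    and cT: "\<And>a y. a \<noteq> [] \<Longrightarrow> cT {a, a @ [y]} = c {last a, y}"
  shows "matching_poly f c (V - {u}) (del_edges E u)
           * matching_poly (f \<circ> last) cT (path_tree_verts pre V E u) (path_tree_edges pre V E u)
       = matching_poly f c V E
           * matching_poly (f \<circ> last) cT (path_tree_verts pre V E u - {pre @ [u]})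
               (del_edges (path_tree_edges pre V E u) (pre @ [u]))"
  using assms(1,2)
proof (induction "card V" arbitrary: V E u pre rule: less_induct)
  case less
  let ?F = "matching_poly f c" and ?FT = "matching_poly (f \<circ> last) cT"
  define N where "N = {v. {u, v} \<in> E}"
  define T where "T v = path_tree_verts (pre @ [u]) (V - {u}) (del_edges E u) v" for v
  define Te where "Te v = path_tree_edges (pre @ [u]) (V - {u}) (del_edges E u) v" for v
  define P where "P = (\<Prod>v\<in>N. ?FT (T v) (Te v))"
  define Q where "Q v = (\<Prod>v'\<in>N - {v}. ?FT (T v') (Te v'))" for v
  have cT_root: "cT {pre @ [u], pre @ [u, y]} = c {u, y}" for y
    using cT[of "pre @ [u]" y] by simp
  note tree_root = matching_poly_path_tree_root[where f = f and cT = cT and c = c and pre = pre,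
      OF less.prems cT_root,
      folded N_def T_def Te_def, folded P_def Q_def]
  have IH: "?F (V - {u} - {v}) (del_edges (del_edges E u) v) * ?FT (T v) (Te v)
      = ?F (V - {u}) (del_edges E u) * ?FT (T v - {pre @ [u, v]}) (del_edges (Te v) (pre @ [u, v]))"
    if "v \<in> N" for v
  proof -
    have "card (V - {u}) < card V"
      using simple_graph_finite_verts[OF less.prems(1)] less.prems(2) by (rule card_Diff1_less)
    moreover have "v \<in> V - {u}" using that simple_graph_neighbour[OF less.prems(1)] by (auto simp: N_def)
    ultimately show ?thesis
      using less.hyps[OF _ simple_graph_del_edges[OF less.prems(1), of u], of v "pre @ [u]"]
      unfolding T_def Te_def by simp
  qed
  have P_split: "P = ?FT (T v) (Te v) * Q v" if "v \<in> N" for v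
  proof -
    have "finite N"
      using simple_graph_finite_verts[OF less.prems(1)] simple_graph_neighbour[OF less.prems(1)]
      by (auto simp: N_def intro: finite_subset)
    then show ?thesis unfolding P_def Q_def using that by (rule prod.remove)
  qed
  have "?F (V - {u}) (del_edges E u) * ?FT (path_tree_verts pre V E u) (path_tree_edges pre V E u)
      = f u * ?F (V - {u}) (del_edges E u) * P
        - (\<Sum>v\<in>N. c {u, v} * (?F (V - {u}) (del_edges E u)
              * ?FT (T v - {pre @ [u, v]}) (del_edges (Te v) (pre @ [u, v]))) * Q v)"
    unfolding tree_root(2) by (simp add: right_diff_distrib sum_distrib_left mult_ac)
  also have "\<dots> = f u * ?F (V - {u}) (del_edges E u) * P
        - (\<Sum>v\<in>N. c {u, v} * (?F (V - {u} - {v}) (del_edges (del_edges E u) v) * ?FT (T v) (Te v)) * Q v)"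
    by (simp only: IH cong: sum.cong)
  also have "\<dots> = ?F V E * P"
    unfolding matching_poly_delete_vertex[OF less.prems] left_diff_distrib sum_distrib_right N_def[symmetric]
    by (simp add: P_split mult_ac cong: sum.cong)
  finally show ?case unfolding tree_root(1) .
qed

theorem theorem3p1:
  fixes V :: "'v set" and E :: "'v set set" and w :: "'v set \<Rightarrow> complex"
    and w1 :: "'v \<Rightarrow> real" and u :: 'v and x :: real
  assumes "simple_graph V E"
    and "\<forall>e\<in>E. w e \<noteq> 0"
    and "u \<in> V"
    and "eta w w1 V E x \<noteq> 0"
    and "eta (tree_w w) (tree_w1 w1) (gpaths V E u) (tree_edges V E u) x \<noteq> 0"
  shows "eta w w1 (del_vertices V u) (del_edges E u) x / eta w w1 V E x =
         eta (tree_w w) (tree_w1 w1) (del_vertices (gpaths V E u) [u]) (del_edges (tree_edges V E u) [u]) x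
         / eta (tree_w w) (tree_w1 w1) (gpaths V E u) (tree_edges V E u) x"
proof -
  let ?f = "\<lambda>v. x - w1 v" and ?c = "\<lambda>e. (cmod (w e))\<^sup>2" and ?cT = "\<lambda>e. (cmod (tree_w w e))\<^sup>2"
  have verts: "gpaths V E u = path_tree_verts [] V E u"
    by (simp add: path_tree_verts_def)
  have edges: "tree_edges V E u = path_tree_edges [] V E u"
    by (simp add: path_tree_edges_def tree_edges_def)
  have sgT: "simple_graph (gpaths V E u) (tree_edges V E u)"
    unfolding verts edges using simple_graph_finite_verts[OF assms(1)] by (rule simple_graph_path_tree)
  have eta_tree: "eta (tree_w w) (tree_w1 w1) VT ET x = matching_poly (?f \<circ> last) ?cT VT ET"
    if "simple_graph VT ET" for VT ET
    using eta_eq_matching_poly[OF that] by (simp add: tree_w1_def comp_def)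
  have "matching_poly ?f ?c (V - {u}) (del_edges E u) * matching_poly (?f \<circ> last) ?cT (gpaths V E u) (tree_edges V E u)
      = matching_poly ?f ?c V E * matching_poly (?f \<circ> last) ?cT (gpaths V E u - {[u]}) (del_edges (tree_edges V E u) [u])"
    unfolding verts edges
    using matching_poly_path_tree[OF assms(1,3), of ?cT ?c ?f "[]"] by (simp add: tree_w_append)
  then show ?thesis
    using assms(4,5)
    unfolding del_vertices_def eta_eq_matching_poly[OF assms(1)] eta_eq_matching_poly[OF simple_graph_del_edges[OF assms(1)]]
      eta_tree[OF sgT] eta_tree[OF simple_graph_del_edges[OF sgT]]
    by (simp add: frac_eq_eq mult.commute)
qed

end
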